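(* Let $\Sigma$ be a fan in $\Lambda_{\mathbb Q}$ with support $|\Sigma|$ contained in the positive Weyl chamber $\Lambda^+_{\mathbb Q}$. If $W\Sigma$ has convex support, then for every $x\in|\Sigma|$ and every face $F$ of $\Lambda^+_{\mathbb Q}$, the orthogonal projection of $x$ onto the linear span of $F$ is also contained in $|\Sigma|$.
   Context: $G$ is a split reductive group with maximal torus $T$, cocharacter lattice $\Lambda$, Weyl group $W$ acting on $\Lambda_{\mathbb Q}$, and positive Weyl chamber $\Lambda^+_{\mathbb Q}$. Orthogonal projection is taken with respect to a $W$-invariant inner product (e.g. for a wall, the projection onto the hyperplane annihilated by a simple root $\alpha_i$ is $x\mapsto x-\frac{\alpha_i\cdot x}{2}\alpha_i^\vee$). $W\Sigma$ is the fan of cones $w\sigma$, $w\in W$, $\sigma\in\Sigma$. *)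

theory Defs
  imports "HOL-Analysis.Analysis"
begin

text \<open>The cocharacter lattice is \<Lambda> = Z^'n, realised as the integer points
of real^'n; \<Lambda>_Q is the set of rational points. The character lattice X is identified
with Z^'n as well, the perfect pairing X x \<Lambda> -> Z being the dot product.
Roots are elements of X, coroots elements of \<Lambda>.\<close>

definition Qvecs :: "(real ^ 'n) set" where
  "Qvecs = {x. \<forall>i. x $ i \<in> \<rat>}"

definition Zvecs :: "(real ^ 'n) set" where
  "Zvecs = {x. \<forall>i. x $ i \<in> \<int>}"

definition refl :: "real ^ 'n \<Rightarrow> real ^ 'n \<Rightarrow> real ^ 'n \<Rightarrow> real ^ 'n" where
  "refl a av x = x - (a \<bullet> x) *\<^sub>R av"

definition reduced_root_datum :: "(real ^ 'n) set \<Rightarrow> (real ^ 'n \<Rightarrow> real ^ 'n) \<Rightarrow> bool" where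
  "reduced_root_datum Phi cor \<longleftrightarrow>
     finite Phi \<and> Phi \<subseteq> Zvecs \<and> cor ` Phi \<subseteq> Zvecs \<and> inj_on cor Phi \<and>
     (\<forall>a\<in>Phi. a \<bullet> cor a = 2) \<and>
     (\<forall>a\<in>Phi. \<forall>b\<in>Phi. b - (b \<bullet> cor a) *\<^sub>R a \<in> Phi) \<and>
     (\<forall>a\<in>Phi. \<forall>b\<in>Phi. cor b - (a \<bullet> cor b) *\<^sub>R cor a \<in> cor ` Phi) \<and>
     (\<forall>a\<in>Phi. \<forall>c. c *\<^sub>R a \<in> Phi \<longrightarrow> c = 1 \<or> c = -1)"

definition is_base :: "(real ^ 'n) set \<Rightarrow> (real ^ 'n) set \<Rightarrow> bool" where
  "is_base Phi Delta \<longleftrightarrow> Delta \<subseteq> Phi \<and> independent Delta \<and>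
     (\<forall>a\<in>Phi. \<exists>c :: real ^ 'n \<Rightarrow> int. a = (\<Sum>d\<in>Delta. of_int (c d) *\<^sub>R d) \<and>
        ((\<forall>d\<in>Delta. c d \<ge> 0) \<or> (\<forall>d\<in>Delta. c d \<le> 0)))"

definition weyl_group :: "(real ^ 'n) set \<Rightarrow> (real ^ 'n \<Rightarrow> real ^ 'n) \<Rightarrow> (real ^ 'n \<Rightarrow> real ^ 'n) set" where
  "weyl_group Phi cor =
     {foldr (\<circ>) (map (\<lambda>a. refl a (cor a)) l) id | l. set l \<subseteq> Phi}"

definition pos_chamber :: "(real ^ 'n) set \<Rightarrow> (real ^ 'n) set" where
  "pos_chamber Delta = {x \<in> Qvecs. \<forall>d\<in>Delta. d \<bullet> x \<ge> 0}"

definition Q_inner_product :: "(real ^ 'n \<Rightarrow> real ^ 'n \<Rightarrow> real) \<Rightarrow> bool" where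
  "Q_inner_product B \<longleftrightarrow>
     (\<forall>x\<in>Qvecs. \<forall>y\<in>Qvecs. B x y = B y x \<and> B x y \<in> \<rat>) \<and>
     (\<forall>x\<in>Qvecs. \<forall>y\<in>Qvecs. \<forall>z\<in>Qvecs. B (x + y) z = B x z + B y z) \<and>
     (\<forall>c\<in>\<rat>. \<forall>x\<in>Qvecs. \<forall>y\<in>Qvecs. B (c *\<^sub>R x) y = c * B x y) \<and>
     (\<forall>x\<in>Qvecs. x \<noteq> 0 \<longrightarrow> B x x > 0)"

definition W_invariant :: "(real ^ 'n \<Rightarrow> real ^ 'n) set \<Rightarrow> (real ^ 'n \<Rightarrow> real ^ 'n \<Rightarrow> real) \<Rightarrow> bool" where
  "W_invariant W B \<longleftrightarrow> (\<forall>w\<in>W. \<forall>x\<in>Qvecs. \<forall>y\<in>Qvecs. B (w x) (w y) = B x y)"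

definition qspan :: "(real ^ 'n) set \<Rightarrow> (real ^ 'n) set" where
  "qspan S = {x. \<exists>T c. finite T \<and> T \<subseteq> S \<and> (\<forall>v\<in>T. c v \<in> \<rat>) \<and>
                      x = (\<Sum>v\<in>T. c v *\<^sub>R v)}"

definition orth_proj :: "(real ^ 'n \<Rightarrow> real ^ 'n \<Rightarrow> real) \<Rightarrow> (real ^ 'n) set \<Rightarrow> real ^ 'n \<Rightarrow> real ^ 'n" where
  "orth_proj B V x = (THE p. p \<in> V \<and> (\<forall>v\<in>V. B (x - p) v = 0))"

definition qcone :: "(real ^ 'n) set \<Rightarrow> (real ^ 'n) set" where
  "qcone S = {x. \<exists>c. (\<forall>v\<in>S. c v \<in> \<rat> \<and> c v \<ge> 0) \<and> x = (\<Sum>v\<in>S. c v *\<^sub>R v)}"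

definition rat_poly_cone :: "(real ^ 'n) set \<Rightarrow> bool" where
  "rat_poly_cone \<sigma> \<longleftrightarrow> (\<exists>S. finite S \<and> S \<subseteq> Qvecs \<and> \<sigma> = qcone S)"

definition strongly_convex :: "(real ^ 'n) set \<Rightarrow> bool" where
  "strongly_convex \<sigma> \<longleftrightarrow> \<sigma> \<inter> uminus ` \<sigma> = {0}"

definition qface :: "(real ^ 'n) set \<Rightarrow> (real ^ 'n) set \<Rightarrow> bool" where
  "qface \<sigma> \<tau> \<longleftrightarrow> (\<exists>u\<in>Qvecs. (\<forall>x\<in>\<sigma>. u \<bullet> x \<ge> 0) \<and> \<tau> = {x\<in>\<sigma>. u \<bullet> x = 0})"

definition is_fan :: "(real ^ 'n) set set \<Rightarrow> bool" where
  "is_fan \<Sigma> \<longleftrightarrow> finite \<Sigma> \<and>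
     (\<forall>\<sigma>\<in>\<Sigma>. rat_poly_cone \<sigma> \<and> strongly_convex \<sigma>) \<and>
     (\<forall>\<sigma>\<in>\<Sigma>. \<forall>\<tau>. qface \<sigma> \<tau> \<longrightarrow> \<tau> \<in> \<Sigma>) \<and>
     (\<forall>\<sigma>\<in>\<Sigma>. \<forall>\<tau>\<in>\<Sigma>. qface \<sigma> (\<sigma> \<inter> \<tau>) \<and> qface \<tau> (\<sigma> \<inter> \<tau>))"

definition support :: "(real ^ 'n) set set \<Rightarrow> (real ^ 'n) set" where
  "support \<Sigma> = \<Union>\<Sigma>"

definition W_fan :: "(real ^ 'n \<Rightarrow> real ^ 'n) set \<Rightarrow> (real ^ 'n) set set \<Rightarrow> (real ^ 'n) set set" where
  "W_fan W \<Sigma> = {w ` \<sigma> | w \<sigma>. w \<in> W \<and> \<sigma> \<in> \<Sigma>}"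

definition qconvex :: "(real ^ 'n) set \<Rightarrow> bool" where
  "qconvex A \<longleftrightarrow> (\<forall>x\<in>A. \<forall>y\<in>A. \<forall>t\<in>\<rat>. 0 \<le> t \<and> t \<le> 1 \<longrightarrow> (1 - t) *\<^sub>R x + t *\<^sub>R y \<in> A)"

end

theory Submission
  imports Defs
begin

text \<open>Let \<open>I\<close> be the set of simple roots vanishing on the face \<open>F\<close>, and let \<open>p\<close> be the
barycentre of the orbit of \<open>x\<close> under the parabolic subgroup \<open>W\<^sub>I\<close> generated by the simple
reflections in \<open>I\<close>. The orbit is finite and lies in \<open>|W\<Sigma>|\<close>, so \<open>p \<in> |W\<Sigma>|\<close> by convexity.
Since \<open>W\<^sub>I\<close> fixes the span of \<open>F\<close> pointwise and preserves the inner product, \<open>x - p\<close> is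
orthogonal to \<open>F\<close>; since \<open>p\<close> is \<open>W\<^sub>I\<close>-invariant, every root in \<open>I\<close> vanishes on \<open>p\<close>, and
the simple roots outside \<open>I\<close> stay nonnegative on the orbit, so \<open>p\<close> lies in the chamber and
hence in \<open>F\<close>. Thus \<open>p\<close> is the orthogonal projection of \<open>x\<close>. Finally \<open>p = w y\<close> with
\<open>y \<in> |\<Sigma>|\<close>, and as both \<open>y\<close> and \<open>w y\<close> are dominant, \<open>w y = y\<close>.
Only the support of \<open>\<Sigma>\<close> enters.\<close>

lemma Qvecs_add [simp, intro]: "x \<in> Qvecs \<Longrightarrow> y \<in> Qvecs \<Longrightarrow> x + y \<in> Qvecs"
  by (simp add: Qvecs_def)

lemma Qvecs_diff [simp, intro]: "x \<in> Qvecs \<Longrightarrow> y \<in> Qvecs \<Longrightarrow> x - y \<in> Qvecs"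
  by (simp add: Qvecs_def)

lemma Qvecs_uminus [simp, intro]: "x \<in> Qvecs \<Longrightarrow> - x \<in> Qvecs"
  by (simp add: Qvecs_def)

lemma Qvecs_zero [simp, intro]: "0 \<in> Qvecs"
  by (simp add: Qvecs_def)

lemma Qvecs_scaleR [simp, intro]: "c \<in> \<rat> \<Longrightarrow> x \<in> Qvecs \<Longrightarrow> c *\<^sub>R x \<in> Qvecs"
  by (simp add: Qvecs_def)

lemma Qvecs_sum: "(\<And>t. t \<in> T \<Longrightarrow> f t \<in> Qvecs) \<Longrightarrow> sum f T \<in> Qvecs"
  by (induction T rule: infinite_finite_induct) auto

lemma Zvecs_imp_Qvecs: "x \<in> Zvecs \<Longrightarrow> x \<in> Qvecs"
  using Ints_subset_Rats by (auto simp: Qvecs_def Zvecs_def)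

lemma inner_Zvecs_Ints: "x \<in> Zvecs \<Longrightarrow> y \<in> Zvecs \<Longrightarrow> x \<bullet> y \<in> \<int>"
  unfolding inner_vec_def Zvecs_def by auto

lemma inner_Qvecs_Rats: "x \<in> Qvecs \<Longrightarrow> y \<in> Qvecs \<Longrightarrow> x \<bullet> y \<in> \<rat>"
  unfolding inner_vec_def Qvecs_def by auto

lemma vec_eq_if_inner_Qvecs_eq:
  fixes x z :: "real ^ 'n"
  assumes "\<And>y. y \<in> Qvecs \<Longrightarrow> x \<bullet> y = z \<bullet> y"
  shows "x = z"
proof (rule euclidean_eqI)
  fix b :: "real ^ 'n"
  assume "b \<in> Basis"
  then have "b \<in> Qvecs"
    by (auto simp: Qvecs_def Basis_vec_def axis_def)
  then show "x \<bullet> b = z \<bullet> b"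
    using assms by blast
qed

lemma subset_qspan: "S \<subseteq> qspan S"
proof
  fix v
  assume "v \<in> S"
  then show "v \<in> qspan S"
    unfolding qspan_def by (intro CollectI exI[of _ "{v}"] exI[of _ "\<lambda>_. 1"]) auto
qed

lemma qspan_subset_Qvecs: "S \<subseteq> Qvecs \<Longrightarrow> qspan S \<subseteq> Qvecs"
  unfolding qspan_def by (auto intro!: Qvecs_sum)

lemma mem_pos_chamber_iff: "x \<in> pos_chamber D \<longleftrightarrow> x \<in> Qvecs \<and> (\<forall>d\<in>D. d \<bullet> x \<ge> 0)"
  by (simp add: pos_chamber_def)

lemma qface_subset: "qface C F \<Longrightarrow> F \<subseteq> C"
  by (auto simp: qface_def)

lemma pos_chamber_sum:
  "(\<And>t. t \<in> T \<Longrightarrow> f t \<in> pos_chamber D) \<Longrightarrow> sum f T \<in> pos_chamber D"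
  by (auto simp: mem_pos_chamber_iff inner_sum_right intro!: sum_nonneg Qvecs_sum)

lemma qconvex_barycentre:
  assumes "qconvex A" and "finite S" and "S \<noteq> {}" and "S \<subseteq> A"
  shows "(1 / real (card S)) *\<^sub>R \<Sum>S \<in> A"
  using assms(2-4)
proof (induction S rule: finite_ne_induct)
  case (singleton x)
  then show ?case by simp
next
  case (insert a S)
  define n where "n = real (card S)"
  have n: "n > 0"
    using insert.hyps(1,2) by (simp add: n_def card_gt_0_iff)
  define t where "t = 1 / (n + 1)"
  have t: "t \<in> \<rat>" "0 \<le> t" "t \<le> 1"
    using n unfolding t_def n_def by auto
  have "(1 / n) *\<^sub>R \<Sum>S \<in> A"
    using insert by (simp add: n_def)
  then have "(1 - t) *\<^sub>R ((1 / n) *\<^sub>R \<Sum>S) + t *\<^sub>R a \<in> A"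
    using assms(1) insert.prems t unfolding qconvex_def by blast
  moreover have "(1 - t) *\<^sub>R ((1 / n) *\<^sub>R \<Sum>S) + t *\<^sub>R a
      = (1 / real (card (insert a S))) *\<^sub>R \<Sum>(insert a S)"
    using insert.hyps n by (simp add: n_def[symmetric] t_def field_simps scaleR_add_right)
  ultimately show ?case
    by simp
qed

lemma pos_chamber_face_has_relint_point:
  assumes "finite D" and "qface (pos_chamber D) F"
  obtains f0 where "f0 \<in> F" and "\<And>d. d \<in> D \<Longrightarrow> \<exists>f\<in>F. d \<bullet> f \<noteq> 0 \<Longrightarrow> d \<bullet> f0 > 0"
proof -
  obtain u where u: "\<forall>y\<in>pos_chamber D. u \<bullet> y \<ge> 0" and F: "F = {y\<in>pos_chamber D. u \<bullet> y = 0}"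
    using assms(2) unfolding qface_def by blast
  define J where "J = {d\<in>D. \<exists>f\<in>F. d \<bullet> f \<noteq> 0}"
  have "\<forall>d\<in>J. \<exists>f. f \<in> F \<and> d \<bullet> f \<noteq> 0"
    by (auto simp: J_def)
  then obtain fd where fd: "\<And>d. d \<in> J \<Longrightarrow> fd d \<in> F \<and> d \<bullet> fd d \<noteq> 0"
    by metis
  define f0 where "f0 = (\<Sum>d\<in>J. fd d)"
  have fd_chamber: "fd d \<in> pos_chamber D" if "d \<in> J" for d
    using fd[OF that] F by blast
  have "f0 \<in> pos_chamber D"
    unfolding f0_def using fd_chamber by (rule pos_chamber_sum)
  moreover have "u \<bullet> f0 = 0"
    using fd F by (simp add: f0_def inner_sum_right)
  ultimately have "f0 \<in> F"
    using F by simp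
  moreover have "d \<bullet> f0 > 0" if "d \<in> J" for d
  proof -
    have nonneg: "e \<in> J \<Longrightarrow> d \<bullet> fd e \<ge> 0" for e
      using fd_chamber \<open>d \<in> J\<close> by (auto simp: J_def mem_pos_chamber_iff)
    have "d \<bullet> fd d > 0"
      using nonneg[OF that] fd[OF that] by simp
    also have "d \<bullet> fd d \<le> d \<bullet> f0"
      unfolding f0_def inner_sum_right
      using assms(1) that nonneg by (intro member_le_sum) (auto simp: J_def)
    finally show ?thesis .
  qed
  ultimately show ?thesis
    using that J_def by blast
qed

lemma pos_chamber_face_memI:
  assumes "finite D" and face: "qface (pos_chamber D) F" and g: "g \<in> pos_chamber D"
    and vanish: "\<And>d. d \<in> D \<Longrightarrow> \<forall>f\<in>F. d \<bullet> f = 0 \<Longrightarrow> d \<bullet> g = 0"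
  shows "g \<in> F"
proof -
  obtain u where u: "\<forall>y\<in>pos_chamber D. u \<bullet> y \<ge> 0" and F: "F = {y\<in>pos_chamber D. u \<bullet> y = 0}"
    using face unfolding qface_def by blast
  obtain f0 where f0: "f0 \<in> F" and relint: "\<And>d. d \<in> D \<Longrightarrow> \<exists>f\<in>F. d \<bullet> f \<noteq> 0 \<Longrightarrow> d \<bullet> f0 > 0"
    using pos_chamber_face_has_relint_point[OF assms(1) face] by blast
  define J where "J = {d\<in>D. \<exists>f\<in>F. d \<bullet> f \<noteq> 0}"
  define J where "J = {d\<in>D. \<exists>f\<in>F. d \<bullet> f \<noteq> 0}"
  have J: "finite J" "\<And>d. d \<in> J \<Longrightarrow> d \<bullet> f0 > 0"
    using assms(1) relint by (auto simp: J_def)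
  define n :: nat where "n = nat \<lceil>\<Sum>d\<in>J. \<bar>d \<bullet> g\<bar> / (d \<bullet> f0)\<rceil> + 1"
  define t where "t = 1 / real n"
  have t: "t \<in> \<rat>" "t > 0"
    by (auto simp: t_def n_def)
  \<comment> \<open>moving from \<open>f0\<close> a little in the direction \<open>-g\<close> stays in the chamber\<close>
  have "d \<bullet> (f0 - t *\<^sub>R g) \<ge> 0" if d: "d \<in> D" for d
  proof (cases "d \<in> J")
    case False
    then have "d \<bullet> f0 = 0" "d \<bullet> g = 0"
      using f0 vanish[OF d] d by (auto simp: J_def)
    then show ?thesis
      by (simp add: inner_diff_right)
  next
    case True
    have pos: "d \<bullet> f0 > 0"
      using J True by blast
    have "\<bar>d \<bullet> g\<bar> / (d \<bullet> f0) \<le> (\<Sum>e\<in>J. \<bar>e \<bullet> g\<bar> / (e \<bullet> f0))"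
      using J True by (intro member_le_sum) (auto intro: divide_nonneg_pos)
    also have "\<dots> < real n"
      unfolding n_def by linarith
    finally have "t * \<bar>d \<bullet> g\<bar> < d \<bullet> f0"
      using pos by (simp add: t_def divide_less_eq field_simps)
    moreover have "t * (d \<bullet> g) \<le> t * \<bar>d \<bullet> g\<bar>"
      using t by simp
    ultimately show ?thesis
      by (simp add: inner_diff_right)
  qed
  then have "f0 - t *\<^sub>R g \<in> pos_chamber D"
    using f0 g t F by (auto simp: mem_pos_chamber_iff)
  then have "u \<bullet> g \<le> 0"
    using u f0 F t by (force simp: inner_diff_right mult_le_0_iff)
  moreover have "u \<bullet> g \<ge> 0"
    using u g by blast
  ultimately show ?thesis
    using F g by simp
qed

lemma exists_step_up: "\<not> f (0::nat) \<Longrightarrow> f n \<Longrightarrow> \<exists>j<n. \<not> f j \<and> f (Suc j)"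
proof (induction n)
  case 0
  then show ?case by simp
next
  case (Suc n)
  then show ?case by (cases "f n") (auto intro: less_SucI)
qed

section \<open>Rational inner products\<close>

locale Q_form =
  fixes B :: "real ^ 'n \<Rightarrow> real ^ 'n \<Rightarrow> real"
  assumes Q_inner_product: "Q_inner_product B"
begin

lemma B_sym: "x \<in> Qvecs \<Longrightarrow> y \<in> Qvecs \<Longrightarrow> B x y = B y x"
  using Q_inner_product unfolding Q_inner_product_def by blast

lemma B_add_left: "x \<in> Qvecs \<Longrightarrow> y \<in> Qvecs \<Longrightarrow> z \<in> Qvecs \<Longrightarrow> B (x + y) z = B x z + B y z"
  using Q_inner_product unfolding Q_inner_product_def by blast

lemma B_scaleR_left: "c \<in> \<rat> \<Longrightarrow> x \<in> Qvecs \<Longrightarrow> y \<in> Qvecs \<Longrightarrow> B (c *\<^sub>R x) y = c * B x y"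
  using Q_inner_product unfolding Q_inner_product_def by blast

lemma B_self_pos: "x \<in> Qvecs \<Longrightarrow> x \<noteq> 0 \<Longrightarrow> B x x > 0"
  using Q_inner_product unfolding Q_inner_product_def by blast

lemma B_self_eq_0_imp: "x \<in> Qvecs \<Longrightarrow> B x x = 0 \<Longrightarrow> x = 0"
  using B_self_pos by fastforce

lemma B_uminus_left: "x \<in> Qvecs \<Longrightarrow> y \<in> Qvecs \<Longrightarrow> B (- x) y = - B x y"
  using B_scaleR_left[of "-1" x y] by simp

lemma B_diff_left: "x \<in> Qvecs \<Longrightarrow> y \<in> Qvecs \<Longrightarrow> z \<in> Qvecs \<Longrightarrow> B (x - y) z = B x z - B y z"
  using B_add_left[of x "- y" z] B_uminus_left[of y z] by simp

lemma B_uminus_right: "x \<in> Qvecs \<Longrightarrow> y \<in> Qvecs \<Longrightarrow> B y (- x) = - B y x"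
  using B_uminus_left B_sym by simp

lemma B_diff_right: "x \<in> Qvecs \<Longrightarrow> y \<in> Qvecs \<Longrightarrow> z \<in> Qvecs \<Longrightarrow> B z (x - y) = B z x - B z y"
  using B_diff_left B_sym by simp

lemma B_scaleR_right: "c \<in> \<rat> \<Longrightarrow> x \<in> Qvecs \<Longrightarrow> y \<in> Qvecs \<Longrightarrow> B y (c *\<^sub>R x) = c * B y x"
  using B_scaleR_left B_sym by simp

lemma B_sum_left:
  "(\<And>t. t \<in> T \<Longrightarrow> f t \<in> Qvecs) \<Longrightarrow> z \<in> Qvecs \<Longrightarrow> B (sum f T) z = (\<Sum>t\<in>T. B (f t) z)"
proof (induction T rule: infinite_finite_induct)
  case (insert x F)
  then show ?case by (simp add: B_add_left Qvecs_sum)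
qed (use B_scaleR_left[of 0 0 z] in simp_all)

lemma B_sum_right:
  "(\<And>t. t \<in> T \<Longrightarrow> f t \<in> Qvecs) \<Longrightarrow> z \<in> Qvecs \<Longrightarrow> B z (sum f T) = (\<Sum>t\<in>T. B z (f t))"
  using B_sum_left[of T f z] B_sym by (simp add: Qvecs_sum)

lemma B_orthogonal_qspan:
  assumes "S \<subseteq> Qvecs" and "y \<in> Qvecs" and "\<And>f. f \<in> S \<Longrightarrow> B y f = 0" and "v \<in> qspan S"
  shows "B y v = 0"
proof -
  obtain T c where T: "finite T" "T \<subseteq> S" "\<forall>t\<in>T. c t \<in> \<rat>" and v: "v = (\<Sum>t\<in>T. c t *\<^sub>R t)"
    using assms(4) unfolding qspan_def by blast
  have "B y v = (\<Sum>t\<in>T. B y (c t *\<^sub>R t))"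
    unfolding v using T assms(1,2) by (intro B_sum_right) auto
  also have "\<dots> = (\<Sum>t\<in>T. c t * B y t)"
    using T assms(1,2) by (intro sum.cong) (auto intro: B_scaleR_right)
  also have "\<dots> = 0"
    using T assms(3) by (auto intro!: sum.neutral)
  finally show ?thesis .
qed

lemma orth_proj_eqI:
  assumes V: "V \<subseteq> Qvecs" and x: "x \<in> Qvecs" and p: "p \<in> V" and perp: "\<forall>v\<in>V. B (x - p) v = 0"
  shows "orth_proj B V x = p"
  unfolding orth_proj_def
proof (rule the_equality)
  show "p \<in> V \<and> (\<forall>v\<in>V. B (x - p) v = 0)"
    using p perp by blast
next
  fix q
  assume q: "q \<in> V \<and> (\<forall>v\<in>V. B (x - q) v = 0)"
  have Q: "p \<in> Qvecs" "q \<in> Qvecs"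
    using p q V by auto
  have "B (p - q) v = B (x - q) v - B (x - p) v" if "v \<in> V" for v
    using B_diff_left[of "x - q" "x - p" v] x Q subsetD[OF V that] by (simp add: algebra_simps)
  then have "B (p - q) v = 0" if "v \<in> V" for v
    using q perp that by simp
  then have "B (p - q) (p - q) = 0"
    using B_diff_right[of p q "p - q"] Q p q by simp
  then show "q = p"
    using B_self_eq_0_imp[of "p - q"] Q by simp
qed

end

section \<open>Root data with an invariant inner product\<close>

locale based_root_datum = Q_form B
  for B :: "real ^ 'n \<Rightarrow> real ^ 'n \<Rightarrow> real" +
  fixes Phi Delta :: "(real ^ 'n) set" and cor :: "real ^ 'n \<Rightarrow> real ^ 'n"
  assumes root_datum: "reduced_root_datum Phi cor"
    and base: "is_base Phi Delta"
    and W_invariant: "W_invariant (weyl_group Phi cor) B"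
begin

text \<open>\<open>refl_L a\<close> and \<open>refl_X a\<close> are the reflection \<open>s\<^sub>a\<close> acting on cocharacters and on
characters; \<open>word_L\<close> and \<open>word_X\<close> evaluate a word in reflections.\<close>

definition refl_L :: "real ^ 'n \<Rightarrow> real ^ 'n \<Rightarrow> real ^ 'n" where
  "refl_L a = refl a (cor a)"

definition refl_X :: "real ^ 'n \<Rightarrow> real ^ 'n \<Rightarrow> real ^ 'n" where
  "refl_X a b = b - (b \<bullet> cor a) *\<^sub>R a"

definition word_L :: "(real ^ 'n) list \<Rightarrow> real ^ 'n \<Rightarrow> real ^ 'n" where
  "word_L L = foldr (\<circ>) (map refl_L L) id"

definition word_X :: "(real ^ 'n) list \<Rightarrow> real ^ 'n \<Rightarrow> real ^ 'n" where
  "word_X L = foldr (\<circ>) (map refl_X L) id"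

lemma word_L_Nil [simp]: "word_L [] = id"
  by (simp add: word_L_def)

lemma word_L_Cons [simp]: "word_L (a # L) = refl_L a \<circ> word_L L"
  by (simp add: word_L_def)

lemma word_L_append: "word_L (L @ M) = word_L L \<circ> word_L M"
  by (induction L) auto

lemma word_X_Nil [simp]: "word_X [] = id"
  by (simp add: word_X_def)

lemma word_X_Cons [simp]: "word_X (a # L) = refl_X a \<circ> word_X L"
  by (simp add: word_X_def)

lemma word_X_append: "word_X (L @ M) = word_X L \<circ> word_X M"
  by (induction L) auto

lemma weyl_group_eq: "weyl_group Phi cor = word_L ` {L. set L \<subseteq> Phi}"
  by (auto simp: weyl_group_def word_L_def refl_L_def[abs_def])

lemma finite_Phi: "finite Phi"
  using root_datum by (simp add: reduced_root_datum_def)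

lemma Phi_Qvecs: "a \<in> Phi \<Longrightarrow> a \<in> Qvecs"
  using root_datum Zvecs_imp_Qvecs by (auto simp: reduced_root_datum_def)

lemma coroot_Qvecs: "a \<in> Phi \<Longrightarrow> cor a \<in> Qvecs"
  using root_datum Zvecs_imp_Qvecs by (auto simp: reduced_root_datum_def)

lemma pairing_Ints: "a \<in> Phi \<Longrightarrow> b \<in> Phi \<Longrightarrow> a \<bullet> cor b \<in> \<int>"
  using root_datum unfolding reduced_root_datum_def by (blast intro: inner_Zvecs_Ints)

lemma pairing_self: "a \<in> Phi \<Longrightarrow> a \<bullet> cor a = 2"
  using root_datum by (auto simp: reduced_root_datum_def)

lemma refl_X_Phi: "a \<in> Phi \<Longrightarrow> b \<in> Phi \<Longrightarrow> refl_X a b \<in> Phi"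
  using root_datum by (auto simp: reduced_root_datum_def refl_X_def)

lemma refl_L_coroot_mem: "a \<in> Phi \<Longrightarrow> b \<in> Phi \<Longrightarrow> refl_L a (cor b) \<in> cor ` Phi"
  using root_datum by (auto simp: reduced_root_datum_def refl_L_def refl_def)

lemma Phi_reduced: "a \<in> Phi \<Longrightarrow> c *\<^sub>R a \<in> Phi \<Longrightarrow> c = 1 \<or> c = -1"
  using root_datum by (auto simp: reduced_root_datum_def)

lemma Delta_subset_Phi: "Delta \<subseteq> Phi"
  using base by (simp add: is_base_def)

lemma finite_Delta: "finite Delta"
  using Delta_subset_Phi finite_Phi finite_subset by blast

lemma coroot_nonzero: "a \<in> Phi \<Longrightarrow> cor a \<noteq> 0"
  using pairing_self by fastforce

lemma refl_L_refl_L [simp]: "a \<in> Phi \<Longrightarrow> refl_L a (refl_L a x) = x"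
  by (simp add: refl_L_def refl_def pairing_self algebra_simps)

lemma refl_X_refl_X [simp]: "a \<in> Phi \<Longrightarrow> refl_X a (refl_X a x) = x"
  by (simp add: refl_X_def pairing_self algebra_simps)

lemma refl_L_coroot_self: "a \<in> Phi \<Longrightarrow> refl_L a (cor a) = - cor a"
  by (simp add: refl_L_def refl_def pairing_self scaleR_2)

lemma refl_X_self: "a \<in> Phi \<Longrightarrow> refl_X a a = - a"
  by (simp add: refl_X_def pairing_self scaleR_2)

lemma inner_refl_L: "b \<bullet> refl_L a x = refl_X a b \<bullet> x"
  by (simp add: refl_L_def refl_X_def refl_def
      algebra_simps inner_commute)

lemma inner_word_L: "b \<bullet> word_L L x = word_X (rev L) b \<bullet> x"
  by (induction L arbitrary: b x) (auto simp: word_X_append inner_refl_L)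

lemma linear_refl_L: "linear (refl_L a)"
  unfolding refl_L_def refl_def by (auto intro!: linearI simp: algebra_simps)

lemma refl_L_Qvecs: "a \<in> Phi \<Longrightarrow> x \<in> Qvecs \<Longrightarrow> refl_L a x \<in> Qvecs"
  unfolding refl_L_def refl_def
  using inner_Qvecs_Rats Phi_Qvecs coroot_Qvecs by (intro Qvecs_diff Qvecs_scaleR) auto

lemma word_L_Qvecs: "set L \<subseteq> Phi \<Longrightarrow> x \<in> Qvecs \<Longrightarrow> word_L L x \<in> Qvecs"
  by (induction L) (auto simp: refl_L_Qvecs)

lemma word_X_Phi: "set L \<subseteq> Phi \<Longrightarrow> b \<in> Phi \<Longrightarrow> word_X L b \<in> Phi"
  by (induction L) (auto simp: refl_X_Phi)

lemma word_L_in_weyl_group: "set L \<subseteq> Phi \<Longrightarrow> word_L L \<in> weyl_group Phi cor"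
  by (auto simp: weyl_group_eq)

lemma B_word_L:
  "set L \<subseteq> Phi \<Longrightarrow> x \<in> Qvecs \<Longrightarrow> y \<in> Qvecs \<Longrightarrow> B (word_L L x) (word_L L y) = B x y"
  using W_invariant word_L_in_weyl_group unfolding W_invariant_def by blast

lemma word_L_rev_word_L: "set L \<subseteq> Phi \<Longrightarrow> word_L (rev L) (word_L L x) = x"
  by (induction L arbitrary: x) (auto simp: word_L_append)

lemma word_L_uminus: "word_L L (- v) = - word_L L v"
  by (induction L) (auto simp: linear_neg[OF linear_refl_L])

lemma word_L_fixes: "(\<And>d. d \<in> set L \<Longrightarrow> d \<bullet> f = 0) \<Longrightarrow> word_L L f = f"
  by (induction L) (auto simp: refl_L_def refl_def)

lemma B_coroot_pos: "a \<in> Phi \<Longrightarrow> B (cor a) (cor a) > 0"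
  using B_self_pos coroot_Qvecs coroot_nonzero by blast

lemma root_inner_via_B:
  assumes a: "a \<in> Phi" and x: "x \<in> Qvecs"
  shows "a \<bullet> x = 2 * B x (cor a) / B (cor a) (cor a)"
proof -
  have ca: "cor a \<in> Qvecs"
    using coroot_Qvecs a by blast
  have ax: "a \<bullet> x \<in> \<rat>"
    using inner_Qvecs_Rats Phi_Qvecs a x by blast
  have "B x (cor a) = B (refl_L a x) (refl_L a (cor a))"
    using B_word_L[of "[a]" x "cor a"] a x ca by simp
  also have "\<dots> = B (x - (a \<bullet> x) *\<^sub>R cor a) (- cor a)"
    by (simp only: refl_L_coroot_self[OF a]) (simp add: refl_L_def refl_def)
  also have "\<dots> = - B x (cor a) + (a \<bullet> x) * B (cor a) (cor a)"
    using x ca ax by (simp add: B_uminus_right B_diff_left B_scaleR_left)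
  finally show ?thesis
    using B_coroot_pos[OF a] by (simp add: field_simps)
qed

lemma root_inner_nonneg_iff: "a \<in> Phi \<Longrightarrow> x \<in> Qvecs \<Longrightarrow> a \<bullet> x \<ge> 0 \<longleftrightarrow> B x (cor a) \<ge> 0"
  using root_inner_via_B B_coroot_pos by (simp add: pos_le_divide_eq)

lemma root_inner_eq_0_iff: "a \<in> Phi \<Longrightarrow> x \<in> Qvecs \<Longrightarrow> a \<bullet> x = 0 \<longleftrightarrow> B x (cor a) = 0"
  using root_inner_via_B B_coroot_pos by fastforce

lemma coroot_refl_X:
  assumes a: "a \<in> Phi" and b: "b \<in> Phi"
  shows "cor (refl_X a b) = refl_L a (cor b)"
proof -
  obtain c where c: "c \<in> Phi" "cor c = refl_L a (cor b)"
    using refl_L_coroot_mem[OF a b] by (metis imageE)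
  have cb: "cor b \<in> Qvecs"
    using coroot_Qvecs b by blast
  have "c = refl_X a b"
  proof (rule vec_eq_if_inner_Qvecs_eq)
    fix y :: "real ^ 'n"
    assume y: "y \<in> Qvecs"
    have sy: "refl_L a y \<in> Qvecs"
      using refl_L_Qvecs a y by blast
    have "B (cor c) (cor c) = B (cor b) (cor b)"
      using c B_word_L[of "[a]" "cor b" "cor b"] a cb by simp
    moreover have "B y (cor c) = B (refl_L a y) (cor b)"
      using c B_word_L[of "[a]" "refl_L a y" "cor b"] a cb sy by simp
    ultimately have "c \<bullet> y = b \<bullet> refl_L a y"
      using root_inner_via_B[OF c(1) y] root_inner_via_B[OF b sy] by simp
    then show "c \<bullet> y = refl_X a b \<bullet> y"
      by (simp add: inner_refl_L)
  qed
  then show ?thesis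
    using c by simp
qed

lemma uminus_Phi: "a \<in> Phi \<Longrightarrow> - a \<in> Phi"
  using refl_X_Phi refl_X_self by metis

lemma coroot_uminus: "a \<in> Phi \<Longrightarrow> cor (- a) = - cor a"
  using coroot_refl_X[of a a] by (simp add: refl_X_self refl_L_coroot_self)

lemma refl_L_uminus: "a \<in> Phi \<Longrightarrow> refl_L (- a) = refl_L a"
  by (rule ext) (simp add: refl_L_def refl_def coroot_uminus)

lemma word_L_coroot: "set L \<subseteq> Phi \<Longrightarrow> b \<in> Phi \<Longrightarrow> word_L L (cor b) = cor (word_X L b)"
  by (induction L) (auto simp: coroot_refl_X word_X_Phi)

lemma refl_L_refl_X:
  assumes "a \<in> Phi" "b \<in> Phi"
  shows "refl_L (refl_X a b) = refl_L a \<circ> refl_L b \<circ> refl_L a"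
proof
  fix x
  have lin: "refl_L a (u - c *\<^sub>R v) = refl_L a u - c *\<^sub>R refl_L a v" for u v c
    using linear_refl_L[of a] by (simp add: linear_diff linear_scale)
  have "refl_L (refl_X a b) x = x - (refl_X a b \<bullet> x) *\<^sub>R cor (refl_X a b)"
    by (simp add: refl_L_def refl_def)
  also have "\<dots> = x - (b \<bullet> refl_L a x) *\<^sub>R refl_L a (cor b)"
    using assms by (simp add: coroot_refl_X inner_refl_L)
  also have "\<dots> = refl_L a (refl_L a x - (b \<bullet> refl_L a x) *\<^sub>R cor b)"
    using assms by (simp add: lin)
  also have "\<dots> = (refl_L a \<circ> refl_L b \<circ> refl_L a) x"
    by (simp add: refl_L_def refl_def)
  finally show "refl_L (refl_X a b) x = (refl_L a \<circ> refl_L b \<circ> refl_L a) x" .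
qed

lemma refl_L_word_X:
  "set u \<subseteq> Phi \<Longrightarrow> d \<in> Phi \<Longrightarrow> refl_L (word_X u d) = word_L u \<circ> refl_L d \<circ> word_L (rev u)"
proof (induction u)
  case (Cons a u)
  then have a: "a \<in> Phi" and u: "set u \<subseteq> Phi"
    by auto
  have "refl_L (word_X (a # u) d) = refl_L a \<circ> refl_L (word_X u d) \<circ> refl_L a"
    using refl_L_refl_X a word_X_Phi u Cons.prems(2) by simp
  also have "\<dots> = word_L (a # u) \<circ> refl_L d \<circ> word_L (rev (a # u))"
    using Cons.IH[OF u Cons.prems(2)] by (simp add: word_L_append fun_eq_iff)
  finally show ?case .
qed simp

section \<open>Positive roots and simple reflections\<close>

definition coef :: "real ^ 'n \<Rightarrow> real ^ 'n \<Rightarrow> int" where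
  "coef a = (SOME c. a = (\<Sum>d\<in>Delta. of_int (c d) *\<^sub>R d) \<and>
        ((\<forall>d\<in>Delta. c d \<ge> 0) \<or> (\<forall>d\<in>Delta. c d \<le> 0)))"

definition positive :: "real ^ 'n \<Rightarrow> bool" where
  "positive a \<longleftrightarrow> (\<forall>d\<in>Delta. coef a d \<ge> 0)"

definition height :: "real ^ 'n \<Rightarrow> int" where
  "height a = (\<Sum>d\<in>Delta. coef a d)"

lemma coef_spec:
  assumes "a \<in> Phi"
  shows "a = (\<Sum>d\<in>Delta. of_int (coef a d) *\<^sub>R d)"
    and "(\<forall>d\<in>Delta. coef a d \<ge> 0) \<or> (\<forall>d\<in>Delta. coef a d \<le> 0)"
proof -
  have "\<exists>c :: real ^ 'n \<Rightarrow> int. a = (\<Sum>d\<in>Delta. of_int (c d) *\<^sub>R d) \<and>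
        ((\<forall>d\<in>Delta. c d \<ge> 0) \<or> (\<forall>d\<in>Delta. c d \<le> 0))"
    using base assms by (simp add: is_base_def)
  then have "a = (\<Sum>d\<in>Delta. of_int (coef a d) *\<^sub>R d) \<and>
        ((\<forall>d\<in>Delta. coef a d \<ge> 0) \<or> (\<forall>d\<in>Delta. coef a d \<le> 0))"
    unfolding coef_def by (rule someI_ex)
  then show "a = (\<Sum>d\<in>Delta. of_int (coef a d) *\<^sub>R d)"
    and "(\<forall>d\<in>Delta. coef a d \<ge> 0) \<or> (\<forall>d\<in>Delta. coef a d \<le> 0)"
    by blast+
qed

lemma coef_unique:
  assumes "a \<in> Phi" and "a = (\<Sum>d\<in>Delta. of_int (c d) *\<^sub>R d)" and "d \<in> Delta"
  shows "coef a d = c d"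
proof -
  have "(\<Sum>e\<in>Delta. of_int (coef a e - c e) *\<^sub>R e) = 0"
    using coef_spec(1)[OF assms(1)] assms(2) by (simp add: scaleR_diff_left sum_subtractf)
  then have "\<forall>e\<in>Delta. real_of_int (coef a e - c e) = 0"
    using base unfolding is_base_def independent_explicit
    by (blast dest: spec[where x = "\<lambda>e. real_of_int (coef a e - c e)"])
  then show ?thesis
    using assms(3) by simp
qed

lemma sum_Delta_indicator:
  "d \<in> Delta \<Longrightarrow> (\<Sum>e\<in>Delta. of_int (if e = d then k else 0) *\<^sub>R e) = of_int k *\<^sub>R d"
  using finite_Delta by (simp add: if_distrib[of "\<lambda>c. of_int c *\<^sub>R _"] cong: if_cong)

lemma coef_simple: "d \<in> Delta \<Longrightarrow> e \<in> Delta \<Longrightarrow> coef d e = (if e = d then 1 else 0)"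
  using coef_unique[of d "\<lambda>e. if e = d then 1 else 0" e] sum_Delta_indicator[of d 1]
    Delta_subset_Phi by auto

lemma coef_refl_X:
  assumes a: "a \<in> Phi" and d: "d \<in> Delta" and k: "of_int k = a \<bullet> cor d" and e: "e \<in> Delta"
  shows "coef (refl_X d a) e = coef a e - (if e = d then k else 0)"
proof (rule coef_unique[OF refl_X_Phi _ e])
  have "refl_X d a = (\<Sum>e\<in>Delta. of_int (coef a e) *\<^sub>R e) - (\<Sum>e\<in>Delta. of_int (if e = d then k else 0) *\<^sub>R e)"
    using coef_spec(1)[OF a] sum_Delta_indicator[OF d] k by (simp add: refl_X_def)
  then show "refl_X d a = (\<Sum>e\<in>Delta. of_int (coef a e - (if e = d then k else 0)) *\<^sub>R e)"
    by (simp add: scaleR_diff_left sum_subtractf)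
qed (use a d Delta_subset_Phi in auto)

lemma coef_uminus: "a \<in> Phi \<Longrightarrow> d \<in> Delta \<Longrightarrow> coef (- a) d = - coef a d"
  using coef_unique[OF uminus_Phi, of a "\<lambda>d. - coef a d" d] coef_spec(1)[of a]
  by (simp add: sum_negf)

lemma positive_or_positive_uminus: "a \<in> Phi \<Longrightarrow> positive a \<or> positive (- a)"
  using coef_spec(2)[of a] coef_uminus[of a] by (auto simp: positive_def)

lemma positive_if_coef_pos: "a \<in> Phi \<Longrightarrow> d \<in> Delta \<Longrightarrow> coef a d > 0 \<Longrightarrow> positive a"
  using coef_spec(2)[of a] by (force simp: positive_def)

lemma positive_simple: "d \<in> Delta \<Longrightarrow> positive d"
  using coef_simple by (simp add: positive_def)

lemma height_nonneg: "positive a \<Longrightarrow> height a \<ge> 0"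
  unfolding height_def positive_def by (rule sum_nonneg) auto

lemma height_refl_X:
  assumes "a \<in> Phi" and d: "d \<in> Delta" and "of_int k = a \<bullet> cor d"
  shows "height (refl_X d a) = height a - k"
proof -
  have "height (refl_X d a) = (\<Sum>e\<in>Delta. coef a e - (if e = d then k else 0))"
    unfolding height_def by (rule sum.cong) (auto simp: coef_refl_X[OF assms(1) d assms(3)])
  also have "\<dots> = height a - k"
    using d finite_Delta by (simp add: sum_subtractf height_def)
  finally show ?thesis .
qed

lemma positive_inner_nonneg:
  assumes "a \<in> Phi" "positive a" "x \<in> pos_chamber Delta"
  shows "a \<bullet> x \<ge> 0"
proof -
  have "a \<bullet> x = (\<Sum>d\<in>Delta. of_int (coef a d) * (d \<bullet> x))"
    by (subst coef_spec(1)[OF assms(1)]) (simp add: inner_sum_left)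
  also have "\<dots> \<ge> 0"
    using assms by (auto simp: positive_def mem_pos_chamber_iff intro!: sum_nonneg)
  finally show ?thesis .
qed

text \<open>Reducedness is what rules out a positive root \<open>a \<noteq> d\<close> supported on \<open>d\<close> alone.\<close>

lemma positive_refl_X_simple:
  assumes d: "d \<in> Delta" and a: "a \<in> Phi" and pos: "positive a" and ne: "a \<noteq> d"
  shows "positive (refl_X d a)"
proof -
  obtain k where k: "of_int k = a \<bullet> cor d"
    using pairing_Ints a Delta_subset_Phi d by (metis Ints_cases subsetD)
  have "\<exists>e\<in>Delta. e \<noteq> d \<and> coef a e > 0"
  proof (rule ccontr)
    assume "\<not> ?thesis"
    then have "\<forall>e\<in>Delta. e \<noteq> d \<longrightarrow> coef a e = 0"
      using pos by (force simp: positive_def)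
    then have "(\<Sum>e\<in>Delta. of_int (coef a e) *\<^sub>R e) = (\<Sum>e\<in>Delta. if e = d then of_int (coef a d) *\<^sub>R e else 0)"
      by (intro sum.cong) auto
    then have ad: "a = of_int (coef a d) *\<^sub>R d"
      using coef_spec(1)[OF a] d finite_Delta by simp
    then have "real_of_int (coef a d) = 1 \<or> real_of_int (coef a d) = -1"
      using Phi_reduced[of d "of_int (coef a d)"] a d Delta_subset_Phi by auto
    moreover have "coef a d \<ge> 0"
      using pos d by (simp add: positive_def)
    ultimately show False
      using ad ne by auto
  qed
  then obtain e where e: "e \<in> Delta" "e \<noteq> d" "coef a e > 0"
    by blast
  then have "coef (refl_X d a) e > 0"
    using coef_refl_X[OF a d k e(1)] by simp
  then show ?thesis
    using positive_if_coef_pos refl_X_Phi a d Delta_subset_Phi e(1) by blast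
qed

lemma positive_pairing_pos:
  assumes a: "a \<in> Phi" and pos: "positive a"
  obtains d where "d \<in> Delta" "a \<bullet> cor d > 0"
proof -
  have ca: "cor a \<in> Qvecs"
    using coroot_Qvecs a by blast
  have "(\<Sum>d\<in>Delta. of_int (coef a d) * (d \<bullet> cor a)) = a \<bullet> cor a"
    by (subst (2) coef_spec(1)[OF a]) (simp add: inner_sum_left)
  then have "(\<Sum>d\<in>Delta. of_int (coef a d) * (d \<bullet> cor a)) > 0"
    using pairing_self a by simp
  then obtain d where d: "d \<in> Delta" "of_int (coef a d) * (d \<bullet> cor a) > 0"
    by (metis (no_types, lifting) not_le sum_nonpos)
  have dP: "d \<in> Phi"
    using d Delta_subset_Phi by blast
  have "coef a d \<ge> 0"
    using pos d by (simp add: positive_def)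
  then have "d \<bullet> cor a > 0"
    using d(2) by (smt (verit) mult_nonneg_nonpos of_int_nonneg)
  \<comment> \<open>both pairings have the sign of \<open>B (cor a) (cor d)\<close>\<close>
  then have "B (cor a) (cor d) > 0"
    using root_inner_nonneg_iff[OF dP ca] root_inner_eq_0_iff[OF dP ca] by linarith
  then have "a \<bullet> cor d > 0"
    using root_inner_nonneg_iff[OF a coroot_Qvecs[OF dP]] root_inner_eq_0_iff[OF a coroot_Qvecs[OF dP]]
      B_sym[OF ca coroot_Qvecs[OF dP]] by linarith
  then show ?thesis
    using that d by blast
qed

lemma refl_L_positive_simple_word:
  "a \<in> Phi \<Longrightarrow> positive a \<Longrightarrow> \<exists>L. set L \<subseteq> Delta \<and> refl_L a = word_L L"
proof (induction "nat (height a)" arbitrary: a rule: less_induct)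
  case less
  show ?case
  proof (cases "a \<in> Delta")
    case True
    then show ?thesis
      by (intro exI[of _ "[a]"]) auto
  next
    case False
    obtain d where d: "d \<in> Delta" "a \<bullet> cor d > 0"
      using positive_pairing_pos less.prems by blast
    have dP: "d \<in> Phi"
      using d Delta_subset_Phi by blast
    obtain k where k: "of_int k = a \<bullet> cor d"
      using pairing_Ints less.prems(1) dP by (metis Ints_cases)
    define b where "b = refl_X d a"
    have bP: "b \<in> Phi" and bpos: "positive b"
      unfolding b_def using refl_X_Phi positive_refl_X_simple dP d less.prems False by blast+
    have "height b = height a - k"
      unfolding b_def using height_refl_X less.prems(1) d(1) k by blast
    then have "nat (height b) < nat (height a)"
      using k d(2) height_nonneg[OF bpos] by simp
    then obtain Lb where Lb: "set Lb \<subseteq> Delta" "refl_L b = word_L Lb"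
      using less.hyps bP bpos by blast
    have "refl_L a = refl_L d \<circ> refl_L b \<circ> refl_L d"
      using refl_L_refl_X[OF dP bP] dP by (simp add: b_def)
    then have "refl_L a = word_L (d # Lb @ [d])"
      using Lb by (simp add: word_L_append comp_assoc)
    then show ?thesis
      using Lb d by (intro exI[of _ "d # Lb @ [d]"]) auto
  qed
qed

lemma refl_L_simple_word: "a \<in> Phi \<Longrightarrow> \<exists>L. set L \<subseteq> Delta \<and> refl_L a = word_L L"
  using positive_or_positive_uminus refl_L_positive_simple_word[of "- a"]
    refl_L_positive_simple_word[of a] uminus_Phi refl_L_uminus by auto

lemma weyl_group_simple_word:
  assumes "w \<in> weyl_group Phi cor"
  obtains L where "set L \<subseteq> Delta" "w = word_L L"
proof -
  obtain l where l: "set l \<subseteq> Phi" "w = word_L l"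
    using assms by (auto simp: weyl_group_eq)
  have "\<exists>L. set L \<subseteq> Delta \<and> word_L l = word_L L"
    using l(1)
  proof (induction l)
    case Nil
    then show ?case
      by (intro exI[of _ "[]"]) auto
  next
    case (Cons a l)
    have "a \<in> Phi"
      using Cons.prems by simp
    then obtain L1 where "set L1 \<subseteq> Delta" "refl_L a = word_L L1"
      using refl_L_simple_word by blast
    moreover obtain L2 where "set L2 \<subseteq> Delta" "word_L l = word_L L2"
      using Cons by auto
    ultimately show ?case
      by (intro exI[of _ "L1 @ L2"]) (auto simp: word_L_append)
  qed
  then show ?thesis
    using l that by auto
qed

section \<open>Dominant elements are fixed by the Weyl group\<close>

text \<open>The exchange condition: \<open>d\<close> cancels against the letter of \<open>L'\<close> at which the roots
\<open>word_X (drop j L') d\<close> turn negative.\<close>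

lemma word_L_shorten:
  assumes L': "set L' \<subseteq> Delta" and d: "d \<in> Delta" and np: "\<not> positive (word_X L' d)"
  obtains M where "set M \<subseteq> Delta" "length M < length (L' @ [d])" "word_L M = word_L (L' @ [d])"
proof -
  have dP: "d \<in> Phi"
    using d Delta_subset_Phi by blast
  define f where "f j = positive (word_X (drop j L') d)" for j
  have "\<not> f 0" "f (length L')"
    using np positive_simple d by (simp_all add: f_def)
  then obtain j where j: "j < length L'" "\<not> f j" "f (Suc j)"
    using exists_step_up[of f] by blast
  define e where "e = L' ! j"
  define u where "u = drop (Suc j) L'"
  have dj: "drop j L' = e # u"
    unfolding e_def u_def using j(1) by (simp add: Cons_nth_drop_Suc)
  have eD: "e \<in> Delta" and uD: "set u \<subseteq> Delta"
    using L' j(1) unfolding e_def u_def by (auto dest: in_set_dropD)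
  then have uP: "set u \<subseteq> Phi"
    using Delta_subset_Phi by blast
  have "positive (word_X u d)" "\<not> positive (refl_X e (word_X u d))"
    using j(2,3) dj by (simp_all add: f_def u_def)
  then have "word_X u d = e"
    using positive_refl_X_simple[OF eD word_X_Phi[OF uP dP]] by blast
  then have se: "refl_L e = word_L u \<circ> refl_L d \<circ> word_L (rev u)"
    using refl_L_word_X[OF uP dP] by simp
  have "word_L (L' @ [d]) = word_L (take j L') \<circ> refl_L e \<circ> word_L u \<circ> refl_L d"
    by (subst append_take_drop_id[of j L', symmetric], simp only: dj) (simp add: word_L_append comp_assoc)
  also have "\<dots> = word_L (take j L' @ u)"
    using se uP dP by (simp add: word_L_append word_L_rev_word_L fun_eq_iff)
  finally have "word_L (take j L' @ u) = word_L (L' @ [d])"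
    by simp
  moreover have "set (take j L' @ u) \<subseteq> Delta"
    using L' uD by (auto dest: in_set_takeD)
  moreover have "length (take j L' @ u) < length (L' @ [d])"
    using j(1) by (simp add: u_def)
  ultimately show ?thesis
    using that by blast
qed

lemma word_L_fixes_dominant:
  "length L = n \<Longrightarrow> set L \<subseteq> Delta \<Longrightarrow> y \<in> pos_chamber Delta \<Longrightarrow>
    word_L L y \<in> pos_chamber Delta \<Longrightarrow> word_L L y = y"
proof (induction n arbitrary: L rule: less_induct)
  case (less n)
  show ?case
  proof (cases L rule: rev_exhaust)
    case Nil
    then show ?thesis by simp
  next
    case (snoc L' d)
    have L': "set L' \<subseteq> Delta" and d: "d \<in> Delta"
      using less.prems snoc by auto
    have dP: "d \<in> Phi" and L'P: "set L' \<subseteq> Phi" and LP: "set L \<subseteq> Phi"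
      using d L' less.prems(2) Delta_subset_Phi by auto
    have yQ: "y \<in> Qvecs" and wyQ: "word_L L y \<in> Qvecs"
      using less.prems(3,4) by (simp_all add: mem_pos_chamber_iff)
    show ?thesis
    proof (cases "positive (word_X L' d)")
      case False
      then obtain M where "set M \<subseteq> Delta" "length M < length L" "word_L M = word_L L"
        using word_L_shorten[OF L' d] snoc by metis
      then show ?thesis
        using less.IH[of "length M" M] less.prems by metis
    next
      case True
      define b where "b = word_X L' d"
      have bP: "b \<in> Phi"
        unfolding b_def using word_X_Phi L'P dP by blast
      \<comment> \<open>\<open>w\<close> maps \<open>d\<^sup>\<or>\<close> to the negative coroot \<open>-b\<^sup>\<or>\<close>, so \<open>B y d\<^sup>\<or>\<close> is both \<open>\<ge> 0\<close> and \<open>\<le> 0\<close>\<close>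
      have "word_L L (cor d) = - cor b"
        using snoc refl_L_coroot_self[OF dP] word_L_uminus word_L_coroot[OF L'P dP]
        by (simp add: b_def word_L_append)
      then have "- B (word_L L y) (cor b) = B y (cor d)"
        using B_word_L[OF LP yQ coroot_Qvecs[OF dP]] B_uminus_right wyQ coroot_Qvecs bP by simp
      moreover have "b \<bullet> word_L L y \<ge> 0"
        using positive_inner_nonneg bP True less.prems(4) by (simp add: b_def)
      moreover have "d \<bullet> y \<ge> 0"
        using d less.prems(3) by (simp add: mem_pos_chamber_iff)
      ultimately have "d \<bullet> y = 0"
        using root_inner_nonneg_iff[OF bP wyQ] root_inner_nonneg_iff[OF dP yQ]
          root_inner_eq_0_iff[OF dP yQ] by linarith
      then have "word_L L y = word_L L' y"
        using snoc by (simp add: word_L_append refl_L_def refl_def)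
      moreover have "word_L L' y = y"
        using less.IH[of "length L'" L'] less.prems snoc L' calculation by simp
      ultimately show ?thesis
        by simp
    qed
  qed
qed

lemma weyl_group_fixes_dominant:
  "w \<in> weyl_group Phi cor \<Longrightarrow> y \<in> pos_chamber Delta \<Longrightarrow> w y \<in> pos_chamber Delta \<Longrightarrow> w y = y"
  using weyl_group_simple_word word_L_fixes_dominant by metis

section \<open>Finiteness of Weyl orbits\<close>

lemma word_L_diff_coroot_comb:
  "set L \<subseteq> Phi \<Longrightarrow> x \<in> Qvecs \<Longrightarrow>
    \<exists>c. (\<forall>a. c a \<in> \<rat>) \<and> word_L L x - x = (\<Sum>a\<in>Phi. c a *\<^sub>R cor a)"
proof (induction L)
  case Nil
  then show ?case
    by (intro exI[of _ "\<lambda>_. 0"]) simp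
next
  case (Cons b L)
  then obtain c where c: "\<forall>a. c a \<in> \<rat>" "word_L L x - x = (\<Sum>a\<in>Phi. c a *\<^sub>R cor a)"
    by auto
  have bP: "b \<in> Phi"
    using Cons.prems by simp
  define k where "k = b \<bullet> word_L L x"
  have kQ: "k \<in> \<rat>"
    unfolding k_def using Cons.prems by (intro inner_Qvecs_Rats Phi_Qvecs[OF bP] word_L_Qvecs) auto
  have "(\<Sum>a\<in>Phi. (if a = b then k else 0) *\<^sub>R cor a) = (\<Sum>a\<in>Phi. if a = b then k *\<^sub>R cor a else 0)"
    by (rule sum.cong) auto
  also have "\<dots> = k *\<^sub>R cor b"
    using bP finite_Phi by simp
  finally have delta: "(\<Sum>a\<in>Phi. (if a = b then k else 0) *\<^sub>R cor a) = k *\<^sub>R cor b" .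
  define c' where "c' a = c a - (if a = b then k else 0)" for a
  have "(\<Sum>a\<in>Phi. c' a *\<^sub>R cor a) = (word_L L x - x) - k *\<^sub>R cor b"
    using c(2) delta by (simp add: c'_def scaleR_diff_left sum_subtractf)
  also have "\<dots> = word_L (b # L) x - x"
    by (simp add: refl_L_def refl_def k_def)
  finally have "word_L (b # L) x - x = (\<Sum>a\<in>Phi. c' a *\<^sub>R cor a)" ..
  moreover have "\<forall>a. c' a \<in> \<rat>"
    using c(1) kQ by (simp add: c'_def)
  ultimately show ?case
    by blast
qed

text \<open>Two points of a Weyl orbit differ by a combination of coroots, so they coincide as soon
as all roots agree on them.\<close>

lemma word_L_eq_if_roots_agree:
  assumes L: "set L \<subseteq> Phi" and M: "set M \<subseteq> Phi" and x: "x \<in> Qvecs"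
    and eq: "\<And>a. a \<in> Phi \<Longrightarrow> a \<bullet> word_L L x = a \<bullet> word_L M x"
  shows "word_L L x = word_L M x"
proof -
  obtain c where c: "\<forall>a. c a \<in> \<rat>" "word_L L x - x = (\<Sum>a\<in>Phi. c a *\<^sub>R cor a)"
    using word_L_diff_coroot_comb[OF L x] by blast
  obtain c' where c': "\<forall>a. c' a \<in> \<rat>" "word_L M x - x = (\<Sum>a\<in>Phi. c' a *\<^sub>R cor a)"
    using word_L_diff_coroot_comb[OF M x] by blast
  define v where "v = word_L L x - word_L M x"
  have vQ: "v \<in> Qvecs"
    unfolding v_def using word_L_Qvecs L M x by auto
  have "v = (word_L L x - x) - (word_L M x - x)"
    by (simp add: v_def)
  also have "\<dots> = (\<Sum>a\<in>Phi. (c a - c' a) *\<^sub>R cor a)"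
    using c c' by (simp add: scaleR_diff_left sum_subtractf)
  finally have v: "v = (\<Sum>a\<in>Phi. (c a - c' a) *\<^sub>R cor a)" .
  have "B v (cor a) = 0" if "a \<in> Phi" for a
    using eq[OF that] root_inner_eq_0_iff[OF that vQ] by (simp add: v_def inner_diff_right)
  then have "B v v = 0"
    using v c(1) c'(1) coroot_Qvecs vQ
    by (simp add: B_sum_right B_scaleR_right Qvecs_scaleR)
  then have "v = 0"
    using B_self_eq_0_imp vQ by blast
  then show ?thesis
    by (simp add: v_def)
qed

definition parabolic_orbit :: "(real ^ 'n) set \<Rightarrow> real ^ 'n \<Rightarrow> (real ^ 'n) set" where
  "parabolic_orbit I x = (\<lambda>L. word_L L x) ` {L. set L \<subseteq> I}"

lemma finite_parabolic_orbit:
  assumes "I \<subseteq> Phi" and x: "x \<in> Qvecs"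
  shows "finite (parabolic_orbit I x)"
proof -
  let ?O = "parabolic_orbit I x"
  define pairings where "pairings v = restrict (\<lambda>a. a \<bullet> v) Phi" for v :: "real ^ 'n"
  have "inj_on pairings ?O"
  proof (rule inj_onI)
    fix v v'
    assume "v \<in> ?O" "v' \<in> ?O" and eq: "pairings v = pairings v'"
    then obtain L M where "set L \<subseteq> I" "v = word_L L x" "set M \<subseteq> I" "v' = word_L M x"
      by (auto simp: parabolic_orbit_def)
    moreover have "a \<bullet> v = a \<bullet> v'" if "a \<in> Phi" for a
      using fun_cong[OF eq, of a] that by (simp add: pairings_def)
    ultimately show "v = v'"
      using word_L_eq_if_roots_agree[of L M x] assms by blast
  qed
  \<comment> \<open>\<open>a \<bullet> w x = w\<^sup>-\<^sup>1 a \<bullet> x\<close> takes only the finitely many values \<open>b \<bullet> x\<close>, \<open>b \<in> Phi\<close>\<close>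
  moreover have "pairings ` ?O \<subseteq> (\<Pi>\<^sub>E a\<in>Phi. (\<lambda>b. b \<bullet> x) ` Phi)"
  proof
    fix p
    assume "p \<in> pairings ` ?O"
    then obtain L where L: "set L \<subseteq> I" "p = pairings (word_L L x)"
      by (auto simp: parabolic_orbit_def)
    have "a \<bullet> word_L L x \<in> (\<lambda>b. b \<bullet> x) ` Phi" if "a \<in> Phi" for a
      using inner_word_L[of a L x] word_X_Phi[of "rev L" a] L assms(1) that by auto
    then show "p \<in> (\<Pi>\<^sub>E a\<in>Phi. (\<lambda>b. b \<bullet> x) ` Phi)"
      using L by (auto simp: pairings_def)
  qed
  moreover have "finite (\<Pi>\<^sub>E a\<in>Phi. (\<lambda>b. b \<bullet> x) ` Phi)"
    using finite_Phi by (simp add: finite_PiE)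
  ultimately show ?thesis
    using inj_on_finite by blast
qed

lemma coef_word_X_simple_self:
  assumes "set M \<subseteq> Delta" and "d \<in> Delta" and "d \<notin> set M"
  shows "word_X M d \<in> Phi \<and> coef (word_X M d) d = 1"
  using assms
proof (induction M)
  case Nil
  then show ?case
    using coef_simple Delta_subset_Phi by auto
next
  case (Cons e M)
  then have IH: "word_X M d \<in> Phi" "coef (word_X M d) d = 1" and e: "e \<in> Delta" "e \<noteq> d"
    by auto
  obtain k where k: "of_int k = word_X M d \<bullet> cor e"
    using pairing_Ints IH(1) e(1) Delta_subset_Phi by (metis Ints_cases subsetD)
  have "coef (refl_X e (word_X M d)) d = 1"
    using coef_refl_X[OF IH(1) e(1) k Cons.prems(2)] IH(2) e(2) by simp
  moreover have "refl_X e (word_X M d) \<in> Phi"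
    using refl_X_Phi IH(1) e(1) Delta_subset_Phi by blast
  ultimately show ?case
    by simp
qed

section \<open>Barycentres of parabolic orbits\<close>

definition orbit_barycentre :: "(real ^ 'n) set \<Rightarrow> real ^ 'n \<Rightarrow> real ^ 'n" where
  "orbit_barycentre I x = (1 / real (card (parabolic_orbit I x))) *\<^sub>R \<Sum>(parabolic_orbit I x)"

lemma self_mem_parabolic_orbit: "x \<in> parabolic_orbit I x"
  unfolding parabolic_orbit_def by (rule image_eqI[of _ _ "[]"]) auto

lemma parabolic_orbit_Qvecs: "I \<subseteq> Phi \<Longrightarrow> x \<in> Qvecs \<Longrightarrow> parabolic_orbit I x \<subseteq> Qvecs"
  unfolding parabolic_orbit_def using word_L_Qvecs by auto

lemma card_parabolic_orbit_pos: "I \<subseteq> Phi \<Longrightarrow> x \<in> Qvecs \<Longrightarrow> card (parabolic_orbit I x) > 0"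
  using finite_parabolic_orbit self_mem_parabolic_orbit card_gt_0_iff by blast

lemma orbit_barycentre_Qvecs: "I \<subseteq> Phi \<Longrightarrow> x \<in> Qvecs \<Longrightarrow> orbit_barycentre I x \<in> Qvecs"
  using parabolic_orbit_Qvecs unfolding orbit_barycentre_def
  by (intro Qvecs_scaleR Qvecs_sum) auto

lemma refl_L_image_parabolic_orbit:
  assumes "d \<in> I" and "I \<subseteq> Phi"
  shows "refl_L d ` parabolic_orbit I x = parabolic_orbit I x"
proof -
  have step: "refl_L d v \<in> parabolic_orbit I x" if v: "v \<in> parabolic_orbit I x" for v
  proof -
    obtain L where "set L \<subseteq> I" "v = word_L L x"
      using v by (auto simp: parabolic_orbit_def)
    then show ?thesis
      using assms(1) unfolding parabolic_orbit_def by (intro image_eqI[of _ _ "d # L"]) auto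
  qed
  moreover have "v \<in> refl_L d ` parabolic_orbit I x" if "v \<in> parabolic_orbit I x" for v
    using step[OF that] refl_L_refl_L[of d v] assms by (metis image_eqI subsetD)
  ultimately show ?thesis
    by blast
qed

lemma inner_orbit_barycentre_eq_0:
  assumes d: "d \<in> I" and I: "I \<subseteq> Phi"
  shows "d \<bullet> orbit_barycentre I x = 0"
proof -
  let ?O = "parabolic_orbit I x"
  have dP: "d \<in> Phi"
    using d I by blast
  have inj: "inj_on (refl_L d) ?O"
    by (rule inj_onI) (metis refl_L_refl_L dP)
  have "refl_L d (\<Sum>?O) = (\<Sum>v\<in>?O. refl_L d v)"
    by (rule linear_sum[OF linear_refl_L])
  also have "\<dots> = \<Sum>(refl_L d ` ?O)"
    using sum.reindex[OF inj, of "\<lambda>v. v"] by (simp add: comp_def)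
  also have "\<dots> = \<Sum>?O"
    using refl_L_image_parabolic_orbit[OF d I] by simp
  finally have "refl_L d (orbit_barycentre I x) = orbit_barycentre I x"
    unfolding orbit_barycentre_def by (simp add: linear_scale[OF linear_refl_L])
  then have "(d \<bullet> orbit_barycentre I x) *\<^sub>R cor d = 0"
    by (simp add: refl_L_def refl_def)
  then show ?thesis
    using coroot_nonzero dP by simp
qed

text \<open>A simple root outside \<open>I\<close> is pulled back by a word in \<open>I\<close> to a positive root, so it
stays nonnegative on the orbit of a dominant point.\<close>

lemma orbit_barycentre_in_chamber:
  assumes I: "I \<subseteq> Delta" and x: "x \<in> pos_chamber Delta"
  shows "orbit_barycentre I x \<in> pos_chamber Delta"
proof -
  have IP: "I \<subseteq> Phi" and xQ: "x \<in> Qvecs"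
    using I Delta_subset_Phi x by (auto simp: mem_pos_chamber_iff)
  have "d \<bullet> orbit_barycentre I x \<ge> 0" if d: "d \<in> Delta" for d
  proof (cases "d \<in> I")
    case True
    then show ?thesis
      using inner_orbit_barycentre_eq_0 IP by simp
  next
    case False
    have "d \<bullet> v \<ge> 0" if v: "v \<in> parabolic_orbit I x" for v
    proof -
      obtain L where L: "set L \<subseteq> I" "v = word_L L x"
        using v by (auto simp: parabolic_orbit_def)
      have "set (rev L) \<subseteq> Delta" "d \<notin> set (rev L)"
        using L I False by auto
      then have "word_X (rev L) d \<in> Phi" "positive (word_X (rev L) d)"
        using coef_word_X_simple_self[of "rev L" d] positive_if_coef_pos d by auto
      then show ?thesis
        using positive_inner_nonneg x L inner_word_L by simp
    qed
    then show ?thesis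
      unfolding orbit_barycentre_def inner_scaleR_right inner_sum_right
      by (simp add: sum_nonneg)
  qed
  then show ?thesis
    using orbit_barycentre_Qvecs[OF IP xQ] by (simp add: mem_pos_chamber_iff)
qed

lemma B_orbit_barycentre:
  assumes I: "I \<subseteq> Phi" and x: "x \<in> Qvecs" and f: "f \<in> Qvecs"
    and fixed: "\<And>d. d \<in> I \<Longrightarrow> d \<bullet> f = 0"
  shows "B (orbit_barycentre I x) f = B x f"
proof -
  let ?O = "parabolic_orbit I x"
  have OQ: "?O \<subseteq> Qvecs"
    using parabolic_orbit_Qvecs[OF I x] .
  have "B v f = B x f" if v: "v \<in> ?O" for v
  proof -
    obtain L where L: "set L \<subseteq> I" "v = word_L L x"
      using v by (auto simp: parabolic_orbit_def)
    then have "word_L L f = f"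
      using fixed by (intro word_L_fixes) auto
    then show ?thesis
      using B_word_L[of L x f] L I x f by auto
  qed
  then have "B (\<Sum>?O) f = real (card ?O) * B x f"
    using B_sum_left[of ?O "\<lambda>v. v" f] OQ f by auto
  moreover have "\<Sum>?O \<in> Qvecs"
    using OQ by (intro Qvecs_sum) auto
  ultimately show ?thesis
    using B_scaleR_left card_parabolic_orbit_pos[OF I x] f
    by (simp add: orbit_barycentre_def)
qed

lemma orbit_barycentre_in_W_support:
  assumes "qconvex (support (W_fan (weyl_group Phi cor) \<Sigma>))" and x: "x \<in> support \<Sigma>"
    and I: "I \<subseteq> Phi" and "x \<in> Qvecs"
  shows "orbit_barycentre I x \<in> support (W_fan (weyl_group Phi cor) \<Sigma>)"
proof -
  have "parabolic_orbit I x \<subseteq> support (W_fan (weyl_group Phi cor) \<Sigma>)"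
  proof
    fix v
    assume "v \<in> parabolic_orbit I x"
    then obtain L where L: "set L \<subseteq> I" "v = word_L L x"
      by (auto simp: parabolic_orbit_def)
    obtain \<sigma> where "\<sigma> \<in> \<Sigma>" "x \<in> \<sigma>"
      using x unfolding support_def by blast
    moreover have "word_L L \<in> weyl_group Phi cor"
      using word_L_in_weyl_group L I by blast
    ultimately show "v \<in> support (W_fan (weyl_group Phi cor) \<Sigma>)"
      unfolding support_def W_fan_def using L by blast
  qed
  then show ?thesis
    unfolding orbit_barycentre_def
    using qconvex_barycentre[OF assms(1) finite_parabolic_orbit[OF I assms(4)]]
      self_mem_parabolic_orbit by blast
qed

lemma dominant_in_W_support_imp_support:
  assumes "support \<Sigma> \<subseteq> pos_chamber Delta" and y: "y \<in> pos_chamber Delta"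
    and "y \<in> support (W_fan (weyl_group Phi cor) \<Sigma>)"
  shows "y \<in> support \<Sigma>"
proof -
  obtain w \<sigma> z where w: "w \<in> weyl_group Phi cor" and "\<sigma> \<in> \<Sigma>" "z \<in> \<sigma>" "y = w z"
    using assms(3) unfolding support_def W_fan_def by blast
  moreover have "z \<in> pos_chamber Delta"
    using assms(1) calculation unfolding support_def by blast
  ultimately have "y = z"
    using weyl_group_fixes_dominant[OF w] y by simp
  then show ?thesis
    using \<open>\<sigma> \<in> \<Sigma>\<close> \<open>z \<in> \<sigma>\<close> unfolding support_def by blast
qed

end

theorem lemma7p4:
  fixes Phi Delta :: "(real ^ 'n) set"
    and cor :: "real ^ 'n \<Rightarrow> real ^ 'n"
    and B :: "real ^ 'n \<Rightarrow> real ^ 'n \<Rightarrow> real"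
    and \<Sigma> :: "(real ^ 'n) set set"
    and x :: "real ^ 'n"
    and F :: "(real ^ 'n) set"
  assumes "reduced_root_datum Phi cor"
    and "is_base Phi Delta"
    and "Q_inner_product B"
    and "W_invariant (weyl_group Phi cor) B"
    and "is_fan \<Sigma>"
    and "support \<Sigma> \<subseteq> pos_chamber Delta"
    and "qconvex (support (W_fan (weyl_group Phi cor) \<Sigma>))"
    and "x \<in> support \<Sigma>"
    and "qface (pos_chamber Delta) F"
  shows "orth_proj B (qspan F) x \<in> support \<Sigma>"
proof -
  interpret based_root_datum B Phi Delta cor
    using assms(1-4) by unfold_locales
  define I where "I = {d\<in>Delta. \<forall>f\<in>F. d \<bullet> f = 0}"
  have I: "I \<subseteq> Delta" "I \<subseteq> Phi"
    using Delta_subset_Phi by (auto simp: I_def)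
  have x: "x \<in> pos_chamber Delta" "x \<in> Qvecs"
    using assms(6,8) by (auto simp: mem_pos_chamber_iff)
  have F: "F \<subseteq> Qvecs"
    using qface_subset[OF assms(9)] by (auto simp: mem_pos_chamber_iff)
  define p where "p = orbit_barycentre I x"
  have p: "p \<in> pos_chamber Delta" "p \<in> Qvecs"
    using orbit_barycentre_in_chamber[OF I(1) x(1)] by (auto simp: p_def mem_pos_chamber_iff)
  have "p \<in> F"
    using pos_chamber_face_memI[OF finite_Delta assms(9) p(1)] inner_orbit_barycentre_eq_0 I
    by (auto simp: I_def p_def)
  moreover have "B (x - p) f = 0" if "f \<in> F" for f
    using B_orbit_barycentre[OF I(2) x(2)] B_diff_left x(2) p(2) F that by (auto simp: I_def p_def)
  ultimately have "orth_proj B (qspan F) x = p"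
    using orth_proj_eqI qspan_subset_Qvecs[OF F] x(2) subset_qspan B_orthogonal_qspan[OF F] p(2)
    by (metis Qvecs_diff subsetD)
  moreover have "p \<in> support \<Sigma>"
    using dominant_in_W_support_imp_support[OF assms(6) p(1)]
      orbit_barycentre_in_W_support[OF assms(7,8) I(2) x(2)] by (simp add: p_def)
  ultimately show ?thesis
    by simp
qed

end
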